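(* Let $\phi$ be a reduced Boolean formula in the input variables $x_1,\dots,x_n$ and let $Q \subseteq [0,1]^n$ be a convex set. Then $\phi(Q)$ is a convex subset of $Q$. Moreover, $\phi(Q)$ contains every point $x \in \{0,1\}^n$ such that $x \in Q$ and $\phi(x) = 1$; that is, $Q \cap \phi^{-1}(1) \subseteq \phi(Q)$.
   Context: Boolean formulas are built from input variables $x_1,\dots,x_n$ using $\wedge$, $\vee$, $\neg$; a formula is interpreted as a function $\{0,1\}^n \to \{0,1\}$ (with $x_i=1$ meaning true). A formula is reduced if negations are applied only to input variables. Every reduced formula is either a literal $x_i$ or $\neg x_i$, or a conjunction or disjunction of two reduced formulas. For a reduced formula $\phi$ and a convex set $Q \subseteq [0,1]^n$, the set $\phi(Q)\subseteq \mathbb{R}^n$ is defined recursively: a non-negated variable $x_i$ is replaced by $\{x \in Q : x_i = 1\}$; a negated variable $\neg x_i$ is replaced by $\{x \in Q : x_i = 0\}$; a conjunction of two subformulas is replaced by the intersection of the corresponding sets; a disjunction of two subformulas is replaced by the convex hull of the union of the corresponding sets. *)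

theory Defs
  imports "HOL-Analysis.Analysis"
begin

datatype 'n rformula =
    Pos 'n
  | Neg 'n
  | Conj "'n rformula" "'n rformula"
  | Disj "'n rformula" "'n rformula"

text \<open>Boolean semantics: a formula as a function of a 0/1 point (x_i = 1 means true).\<close>
fun eval_rf :: "'n rformula \<Rightarrow> real ^ 'n \<Rightarrow> bool" where
  "eval_rf (Pos i) x = (x $ i = 1)"
| "eval_rf (Neg i) x = (\<not> (x $ i = 1))"
| "eval_rf (Conj a b) x = (eval_rf a x \<and> eval_rf b x)"
| "eval_rf (Disj a b) x = (eval_rf a x \<or> eval_rf b x)"

fun rf_set :: "'n rformula \<Rightarrow> (real ^ 'n) set \<Rightarrow> (real ^ 'n) set" where
  "rf_set (Pos i) Q = {x \<in> Q. x $ i = 1}"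
| "rf_set (Neg i) Q = {x \<in> Q. x $ i = 0}"
| "rf_set (Conj a b) Q = rf_set a Q \<inter> rf_set b Q"
| "rf_set (Disj a b) Q = convex hull (rf_set a Q \<union> rf_set b Q)"

definition unit_cube :: "(real ^ 'n) set" where
  "unit_cube = {x. \<forall>i. 0 \<le> x $ i \<and> x $ i \<le> 1}"

definition bool_points :: "(real ^ 'n) set" where
  "bool_points = {x. \<forall>i. x $ i = 0 \<or> x $ i = 1}"

end

theory Submission
  imports Defs
begin

text \<open>Induction on the formula: literals cut Q by coordinate hyperplanes, intersections
  preserve convexity, and the convex hull of a union of convex subsets of the convex set Q
  stays inside Q.\<close>

lemma convex_coordinate_slice:
  fixes Q :: "(real ^ 'n) set"
  assumes "convex Q"
  shows "convex {x \<in> Q. x $ i = c}"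
proof -
  have "convex {x::real ^ 'n. x $ i = c}"
    using convex_hyperplane[of "axis i (1::real)" c]
    by (simp add: cart_eq_inner_axis inner_commute)
  then have "convex (Q \<inter> {x. x $ i = c})"
    using assms convex_Int by blast
  then show ?thesis
    by (simp add: Collect_conj_eq)
qed

lemma convex_rf_set_subset:
  fixes \<phi> :: "'n::finite rformula" and Q :: "(real ^ 'n) set"
  assumes "convex Q"
  shows "convex (rf_set \<phi> Q) \<and> rf_set \<phi> Q \<subseteq> Q"
proof (induction \<phi>)
  case (Pos i)
  show ?case using convex_coordinate_slice[OF assms] by auto
next
  case (Neg i)
  show ?case using convex_coordinate_slice[OF assms] by auto
next
  case (Conj a b)
  then show ?case by (auto intro: convex_Int)
next
  case (Disj a b)
  then have "convex hull (rf_set a Q \<union> rf_set b Q) \<subseteq> Q"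
    using assms by (intro hull_minimal) auto
  then show ?case by simp
qed

lemma rf_set_contains_satisfying_bool_points:
  fixes \<phi> :: "'n::finite rformula" and Q :: "(real ^ 'n) set"
  shows "{x \<in> Q \<inter> bool_points. eval_rf \<phi> x} \<subseteq> rf_set \<phi> Q"
proof (induction \<phi>)
  case (Neg i)
  show ?case by (auto simp: bool_points_def)
next
  case (Disj a b)
  then show ?case by (auto intro: hull_inc)
qed auto

theorem proposition4p1:
  fixes \<phi> :: "'n::finite rformula" and Q :: "(real ^ 'n) set"
  assumes "Q \<subseteq> unit_cube" and "convex Q"
  shows "convex (rf_set \<phi> Q) \<and> rf_set \<phi> Q \<subseteq> Q
         \<and> {x \<in> Q \<inter> bool_points. eval_rf \<phi> x} \<subseteq> rf_set \<phi> Q"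
  using convex_rf_set_subset[OF assms(2)] rf_set_contains_satisfying_bool_points
  by blast

end
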